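(* Let $f:[0,\infty)\to\mathbb{R}$ be a continuous superquadratic function, let $\Phi:\mathbb{M}_n\to\mathbb{M}_m$ be a unital positive linear map, and let $\tau$ be a state on $\mathbb{M}_m$. Then for every positive semidefinite $A\in\mathbb{M}_n^+$, $$f\big(\tau(\Phi(A))\big)\le \tau\big(\Phi(f(A))\big)-\tau\Big(\Phi\big(f(|A-\tau(\Phi(A))I|)\big)\Big).$$
   Context: A function $f:[0,\infty)\to\mathbb{R}$ is called superquadratic if for every $s\ge 0$ there exists a constant $C_s\in\mathbb{R}$ such that $f(t)\ge f(s)+C_s(t-s)+f(|t-s|)$ for all $t\ge0$. A linear map $\Phi$ is positive if it maps positive semidefinite matrices to positive semidefinite matrices and unital if $\Phi(I)=I$. A state on $\mathbb{M}_m$ is a positive linear functional $\tau$ with $\tau(I)=1$. $f(X)$ is defined by the spectral functional calculus and $|X|=(X^*X)^{1/2}$. *)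

theory Defs
  imports Complex_Main "Jordan_Normal_Form.Schur_Decomposition"
begin

definition hermitian_mat :: "nat \<Rightarrow> complex mat \<Rightarrow> bool" where
  "hermitian_mat n A \<longleftrightarrow> A \<in> carrier_mat n n \<and> mat_adjoint A = A"

definition psd_mat :: "nat \<Rightarrow> complex mat \<Rightarrow> bool" where
  "psd_mat n A \<longleftrightarrow> hermitian_mat n A \<and>
     (\<forall>v \<in> carrier_vec n. 0 \<le> Re ((A *\<^sub>v v) \<bullet>c v))"

definition unitary_mat :: "nat \<Rightarrow> complex mat \<Rightarrow> bool" where
  "unitary_mat n U \<longleftrightarrow> U \<in> carrier_mat n n \<and> mat_adjoint U * U = 1\<^sub>m n"

definition mat_fun :: "(real \<Rightarrow> real) \<Rightarrow> nat \<Rightarrow> complex mat \<Rightarrow> complex mat" where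
  "mat_fun f n A = (SOME B. \<exists>U d. unitary_mat n U \<and>
       A = U * mat_diag n (\<lambda>i. complex_of_real (d i)) * mat_adjoint U \<and>
       B = U * mat_diag n (\<lambda>i. complex_of_real (f (d i))) * mat_adjoint U)"

definition mat_abs :: "nat \<Rightarrow> complex mat \<Rightarrow> complex mat" where
  "mat_abs n X = mat_fun sqrt n (mat_adjoint X * X)"

definition superquadratic :: "(real \<Rightarrow> real) \<Rightarrow> bool" where
  "superquadratic f \<longleftrightarrow> (\<forall>s\<ge>0. \<exists>C. \<forall>t\<ge>0. f t \<ge> f s + C * (t - s) + f \<bar>t - s\<bar>)"

definition linear_map_mat :: "nat \<Rightarrow> nat \<Rightarrow> (complex mat \<Rightarrow> complex mat) \<Rightarrow> bool" where
  "linear_map_mat n m \<Phi> \<longleftrightarrow>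
     (\<forall>A \<in> carrier_mat n n. \<Phi> A \<in> carrier_mat m m) \<and>
     (\<forall>A \<in> carrier_mat n n. \<forall>B \<in> carrier_mat n n. \<Phi> (A + B) = \<Phi> A + \<Phi> B) \<and>
     (\<forall>c. \<forall>A \<in> carrier_mat n n. \<Phi> (c \<cdot>\<^sub>m A) = c \<cdot>\<^sub>m \<Phi> A)"

definition unital_positive_map :: "nat \<Rightarrow> nat \<Rightarrow> (complex mat \<Rightarrow> complex mat) \<Rightarrow> bool" where
  "unital_positive_map n m \<Phi> \<longleftrightarrow> linear_map_mat n m \<Phi> \<and>
     (\<forall>A. psd_mat n A \<longrightarrow> psd_mat m (\<Phi> A)) \<and> \<Phi> (1\<^sub>m n) = 1\<^sub>m m"

definition state_mat :: "nat \<Rightarrow> (complex mat \<Rightarrow> complex) \<Rightarrow> bool" where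
  "state_mat m \<tau> \<longleftrightarrow>
     (\<forall>A \<in> carrier_mat m m. \<forall>B \<in> carrier_mat m m. \<tau> (A + B) = \<tau> A + \<tau> B) \<and>
     (\<forall>c. \<forall>A \<in> carrier_mat m m. \<tau> (c \<cdot>\<^sub>m A) = c * \<tau> A) \<and>
     (\<forall>A. psd_mat m A \<longrightarrow> \<tau> A \<in> \<real> \<and> 0 \<le> Re (\<tau> A)) \<and>
     \<tau> (1\<^sub>m m) = 1"

end

theory Submission
  imports Defs "Jordan_Normal_Form.Spectral_Radius"
begin

text \<open>The map \<open>\<omega> X = \<tau> (\<Phi> X)\<close> is a state on \<open>\<M>\<^sub>n\<close>, so it suffices to treat a state
  \<open>\<omega>\<close> and a spectral decomposition \<open>A = U diag(d) U\<^sup>*\<close> with \<open>d \<ge> 0\<close>. With \<open>s = \<omega>(A) \<ge> 0\<close>,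
  superquadraticity at \<open>s\<close> gives a constant \<open>C\<close> with
  \<open>f(d\<^sub>i) \<ge> f(s) + C (d\<^sub>i - s) + f(|d\<^sub>i - s|)\<close> for every eigenvalue, i.e. the matrix
  \<open>f(A) - f(s) I - C (A - s I) - f(|A - s I|)\<close> is positive semidefinite. Applying \<open>\<omega>\<close>
  gives the inequality, because \<open>\<omega>(A - s I) = 0\<close> kills the linear term.
  The unitary spectral theorem needed for this is obtained by diagonalising a Hermitian
  matrix one column at a time with Householder reflections.\<close>

section \<open>Adjoints and unitary matrices\<close>

lemma mat_adjoint_altdef:
  "mat_adjoint A = mat (dim_col A) (dim_row A) (\<lambda>(i,j). conjugate (A $$ (j,i)))"
  unfolding mat_adjoint_def
  by (rule eq_matI) (auto simp: mat_of_rows_def cols_def)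

lemma dim_mat_adjoint[simp]:
  "dim_row (mat_adjoint A) = dim_col A" "dim_col (mat_adjoint A) = dim_row A"
  by (auto simp: mat_adjoint_altdef)

lemma mat_adjoint_carrier: "A \<in> carrier_mat n m \<Longrightarrow> mat_adjoint A \<in> carrier_mat m n"
  by (auto simp: mat_adjoint_altdef)

lemma index_mat_adjoint[simp]:
  "i < dim_col A \<Longrightarrow> j < dim_row A \<Longrightarrow> mat_adjoint A $$ (i,j) = cnj (A $$ (j,i))"
  by (auto simp: mat_adjoint_altdef)

lemma mat_adjoint_adjoint[simp]: "mat_adjoint (mat_adjoint A) = (A :: complex mat)"
  by (rule eq_matI) (auto simp: mat_adjoint_altdef)

lemma mat_adjoint_one[simp]: "mat_adjoint (1\<^sub>m n :: complex mat) = 1\<^sub>m n"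
  by (rule eq_matI) (auto simp: mat_adjoint_altdef)

lemma mat_adjoint_mult:
  assumes "(A :: complex mat) \<in> carrier_mat n k" "B \<in> carrier_mat k m"
  shows "mat_adjoint (A * B) = mat_adjoint B * mat_adjoint A"
  using assms
  by (intro eq_matI) (auto simp: mat_adjoint_altdef scalar_prod_def cnj_sum mult.commute intro!: sum.cong)

lemma cscalar_prod_mult_mat_vec:
  assumes "(A :: complex mat) \<in> carrier_mat n m" "x \<in> carrier_vec m" "y \<in> carrier_vec n"
  shows "(A *\<^sub>v x) \<bullet>c y = x \<bullet>c (mat_adjoint A *\<^sub>v y)"
proof -
  have "(A *\<^sub>v x) \<bullet>c y = (\<Sum>i<n. \<Sum>j<m. A $$ (i,j) * x $ j * cnj (y $ i))"
    using assms by (simp add: scalar_prod_def sum_distrib_right atLeast0LessThan row_def)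
  also have "\<dots> = (\<Sum>j<m. \<Sum>i<n. A $$ (i,j) * x $ j * cnj (y $ i))"
    by (rule sum.swap)
  also have "\<dots> = x \<bullet>c (mat_adjoint A *\<^sub>v y)"
    using assms by (simp add: scalar_prod_def sum_distrib_left atLeast0LessThan row_def cnj_sum mult_ac)
  finally show ?thesis .
qed

lemma mult_mat_vec_unit_vec:
  assumes "(A :: complex mat) \<in> carrier_mat n m" "j < m"
  shows "A *\<^sub>v unit_vec m j = col A j"
  using assms by (intro eq_vecI) (auto simp: carrier_matD)

lemma unitary_mat_carrier[simp]: "unitary_mat n U \<Longrightarrow> U \<in> carrier_mat n n"
  by (simp add: unitary_mat_def)

lemma unitary_mat_one: "unitary_mat n (1\<^sub>m n)"
  by (simp add: unitary_mat_def)

lemma unitary_mat_mult_adjoint: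
  assumes "unitary_mat n U"
  shows "U * mat_adjoint U = 1\<^sub>m n"
  using assms mat_mult_left_right_inverse[of "mat_adjoint U" n U] unfolding unitary_mat_def
  by (auto simp: mat_adjoint_carrier)

lemma unitary_adjoint_mult_cancel:
  assumes "unitary_mat n U" "X \<in> carrier_mat n k"
  shows "mat_adjoint U * (U * X) = X"
proof -
  have "mat_adjoint U * (U * X) = (mat_adjoint U * U) * X"
    using assms by (subst assoc_mult_mat[of _ n n _ n _ k]) (auto simp: mat_adjoint_carrier)
  thus ?thesis using assms unfolding unitary_mat_def by auto
qed

lemma unitary_mult_adjoint_cancel:
  assumes "unitary_mat n U" "X \<in> carrier_mat n k"
  shows "U * (mat_adjoint U * X) = X"
proof -
  have "U * (mat_adjoint U * X) = (U * mat_adjoint U) * X"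
    using assms by (subst assoc_mult_mat[of _ n n _ n _ k]) (auto simp: mat_adjoint_carrier)
  thus ?thesis using assms unitary_mat_mult_adjoint[OF assms(1)] by auto
qed

lemma unitary_mat_mult:
  assumes uU: "unitary_mat n U" and uV: "unitary_mat n V"
  shows "unitary_mat n (U * V)"
proof -
  have U: "U \<in> carrier_mat n n" and U': "mat_adjoint U \<in> carrier_mat n n"
    and V: "V \<in> carrier_mat n n" and V': "mat_adjoint V \<in> carrier_mat n n"
    using uU uV by (auto simp: mat_adjoint_carrier)
  have "mat_adjoint (U * V) * (U * V) = mat_adjoint V * (mat_adjoint U * (U * V))"
    using U U' V V' by (simp add: mat_adjoint_mult[OF U V] assoc_mult_mat[of _ n n _ n _ n])
  also have "\<dots> = 1\<^sub>m n"
    using uV by (simp add: unitary_adjoint_mult_cancel[OF uU V] unitary_mat_def)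
  finally show ?thesis unfolding unitary_mat_def using U V by simp
qed

lemma hermitian_mat_unitary_conj:
  assumes hA: "hermitian_mat n A" and W: "W \<in> carrier_mat n n"
  shows "hermitian_mat n (mat_adjoint W * A * W)"
proof -
  have A: "A \<in> carrier_mat n n" and adjA: "mat_adjoint A = A"
    using hA unfolding hermitian_mat_def by auto
  have W': "mat_adjoint W \<in> carrier_mat n n" using W by (rule mat_adjoint_carrier)
  have "mat_adjoint (mat_adjoint W * A * W) = mat_adjoint W * mat_adjoint (mat_adjoint W * A)"
    using mat_adjoint_mult[of "mat_adjoint W * A" n n W n] A W W' by simp
  also have "mat_adjoint (mat_adjoint W * A) = A * W"
    using mat_adjoint_mult[OF W' A] adjA by simp
  finally show ?thesis
    unfolding hermitian_mat_def using A W W' by (simp add: assoc_mult_mat[of _ n n _ n _ n])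
qed

section \<open>Matrices given by a spectral decomposition\<close>

definition spectral_mat :: "nat \<Rightarrow> complex mat \<Rightarrow> (nat \<Rightarrow> real) \<Rightarrow> complex mat" where
  "spectral_mat n U a = U * mat_diag n (\<lambda>i. complex_of_real (a i)) * mat_adjoint U"

lemma spectral_mat_carrier[simp]: "U \<in> carrier_mat n n \<Longrightarrow> spectral_mat n U a \<in> carrier_mat n n"
  unfolding spectral_mat_def by auto

lemma dim_spectral_mat[simp]:
  "U \<in> carrier_mat n n \<Longrightarrow> dim_row (spectral_mat n U a) = n"
  "U \<in> carrier_mat n n \<Longrightarrow> dim_col (spectral_mat n U a) = n"
  unfolding spectral_mat_def by auto

lemma index_spectral_mat:
  assumes "U \<in> carrier_mat n n" "i < n" "j < n"
  shows "spectral_mat n U a $$ (i,j) = (\<Sum>l=0..<n. U $$ (i,l) * of_real (a l) * cnj (U $$ (j,l)))"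
  using assms unfolding spectral_mat_def
  by (simp add: mat_diag_mult_right scalar_prod_def)

lemma spectral_mat_add:
  assumes "U \<in> carrier_mat n n"
  shows "spectral_mat n U a + spectral_mat n U b = spectral_mat n U (\<lambda>i. a i + b i)"
  using assms
  by (intro eq_matI) (auto simp: index_spectral_mat distrib_left distrib_right sum.distrib)

lemma spectral_mat_diff:
  assumes "U \<in> carrier_mat n n"
  shows "spectral_mat n U a - spectral_mat n U b = spectral_mat n U (\<lambda>i. a i - b i)"
  using assms
  by (intro eq_matI)
    (auto simp: index_spectral_mat sum_subtractf[symmetric] algebra_simps intro!: sum.cong)

lemma spectral_mat_smult:
  assumes "U \<in> carrier_mat n n"
  shows "complex_of_real c \<cdot>\<^sub>m spectral_mat n U a = spectral_mat n U (\<lambda>i. c * a i)"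
  using assms
  by (intro eq_matI)
    (auto simp: index_spectral_mat sum_distrib_left algebra_simps intro!: sum.cong)

lemma mat_adjoint_spectral_mat:
  assumes "U \<in> carrier_mat n n"
  shows "mat_adjoint (spectral_mat n U a) = spectral_mat n U a"
  using assms
  by (intro eq_matI) (auto simp: index_spectral_mat cnj_sum algebra_simps intro!: sum.cong)

lemma spectral_mat_one:
  assumes "unitary_mat n U"
  shows "spectral_mat n U (\<lambda>_. 1) = 1\<^sub>m n"
proof -
  have "U * 1\<^sub>m n = U" using assms right_mult_one_mat[of U n n] by simp
  thus ?thesis by (simp add: spectral_mat_def unitary_mat_mult_adjoint[OF assms])
qed

lemma spectral_mat_mult:
  assumes uU: "unitary_mat n U"
  shows "spectral_mat n U a * spectral_mat n U b = spectral_mat n U (\<lambda>i. a i * b i)"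
proof -
  have U: "U \<in> carrier_mat n n" and U': "mat_adjoint U \<in> carrier_mat n n"
    using uU by (auto simp: mat_adjoint_carrier)
  define Da where "Da = mat_diag n (\<lambda>i. complex_of_real (a i))"
  define Db where "Db = mat_diag n (\<lambda>i. complex_of_real (b i))"
  have Da: "Da \<in> carrier_mat n n" and Db: "Db \<in> carrier_mat n n"
    by (auto simp: Da_def Db_def)
  have "spectral_mat n U a * spectral_mat n U b
      = U * (Da * (mat_adjoint U * (U * (Db * mat_adjoint U))))"
    unfolding spectral_mat_def Da_def[symmetric] Db_def[symmetric]
    using U U' Da Db by (simp add: assoc_mult_mat[of _ n n _ n _ n])
  also have "mat_adjoint U * (U * (Db * mat_adjoint U)) = Db * mat_adjoint U"
    using Db U' by (intro unitary_adjoint_mult_cancel[OF uU]) auto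
  also have "U * (Da * (Db * mat_adjoint U)) = U * (Da * Db) * mat_adjoint U"
    using U U' Da Db by (simp add: assoc_mult_mat[of _ n n _ n _ n])
  also have "Da * Db = mat_diag n (\<lambda>i. complex_of_real (a i * b i))"
    by (simp add: Da_def Db_def)
  finally show ?thesis unfolding spectral_mat_def .
qed

text \<open>Uniqueness of the functional calculus: \<open>W = V\<^sup>* U\<close> intertwines \<open>diag(a)\<close> and
  \<open>diag(b)\<close>, so \<open>W\<^sub>i\<^sub>j \<noteq> 0\<close> forces \<open>a\<^sub>j = b\<^sub>i\<close>; hence \<open>W\<close> also intertwines
  \<open>diag(g \<circ> a)\<close> and \<open>diag(g \<circ> b)\<close>.\<close>

lemma spectral_mat_eq_imp_fun_eq:
  assumes uU: "unitary_mat n U" and uV: "unitary_mat n V"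
    and eq: "spectral_mat n U a = spectral_mat n V b"
  shows "spectral_mat n U (\<lambda>i. g (a i)) = spectral_mat n V (\<lambda>i. g (b i))"
proof -
  have U: "U \<in> carrier_mat n n" and U': "mat_adjoint U \<in> carrier_mat n n"
    and V: "V \<in> carrier_mat n n" and V': "mat_adjoint V \<in> carrier_mat n n"
    using uU uV by (auto simp: mat_adjoint_carrier)
  define W where "W = mat_adjoint V * U"
  have W: "W \<in> carrier_mat n n" using U V' by (simp add: W_def)
  define Da where "Da = mat_diag n (\<lambda>i. complex_of_real (a i))"
  define Db where "Db = mat_diag n (\<lambda>i. complex_of_real (b i))"
  define Ga where "Ga = mat_diag n (\<lambda>i. complex_of_real (g (a i)))"
  define Gb where "Gb = mat_diag n (\<lambda>i. complex_of_real (g (b i)))"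
  have Da: "Da \<in> carrier_mat n n" and Db: "Db \<in> carrier_mat n n"
    and Ga: "Ga \<in> carrier_mat n n" and Gb: "Gb \<in> carrier_mat n n"
    by (auto simp: Da_def Db_def Ga_def Gb_def)
  have "W * Da = mat_adjoint V * (U * (Da * (mat_adjoint U * U)))"
    using uU U U' V' Da unfolding W_def unitary_mat_def by (simp add: assoc_mult_mat[of _ n n _ n _ n])
  also have "\<dots> = mat_adjoint V * (U * Da * mat_adjoint U) * U"
    using U U' V' Da by (simp add: assoc_mult_mat[of _ n n _ n _ n])
  also have "U * Da * mat_adjoint U = V * Db * mat_adjoint V"
    using eq unfolding spectral_mat_def Da_def Db_def .
  also have "mat_adjoint V * (V * Db * mat_adjoint V) * U = mat_adjoint V * (V * (Db * W))"
    using V V' U Db unfolding W_def by (simp add: assoc_mult_mat[of _ n n _ n _ n])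
  also have "\<dots> = Db * W" using Db W by (intro unitary_adjoint_mult_cancel[OF uV]) auto
  finally have WD: "W * Da = Db * W" .
  have WG: "W * Ga = Gb * W"
  proof (rule eq_matI)
    fix i j assume "i < dim_row (Gb * W)" and "j < dim_col (Gb * W)"
    hence ij: "i < n" "j < n" using W Gb by auto
    have "(W * Da) $$ (i,j) = (Db * W) $$ (i,j)" using WD by simp
    hence "W $$ (i,j) * a j = b i * W $$ (i,j)"
      using ij W unfolding Da_def Db_def by (simp add: mat_diag_mult_left mat_diag_mult_right)
    hence "W $$ (i,j) = 0 \<or> a j = b i" by (metis mult.commute mult_cancel_left of_real_eq_iff)
    thus "(W * Ga) $$ (i,j) = (Gb * W) $$ (i,j)"
      using ij W unfolding Ga_def Gb_def by (auto simp: mat_diag_mult_left mat_diag_mult_right)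
  qed (use W Ga Gb in auto)
  have "spectral_mat n U (\<lambda>i. g (a i)) = V * (mat_adjoint V * (U * (Ga * mat_adjoint U)))"
    unfolding spectral_mat_def Ga_def[symmetric]
    using unitary_mult_adjoint_cancel[OF uV, of "U * (Ga * mat_adjoint U)" n] U U' Ga
    by (simp add: assoc_mult_mat[OF U Ga U'])
  also have "\<dots> = V * (W * Ga) * mat_adjoint U"
    using U U' V V' Ga unfolding W_def by (simp add: assoc_mult_mat[of _ n n _ n _ n])
  also have "\<dots> = V * (Gb * (mat_adjoint V * (U * mat_adjoint U)))"
    unfolding WG using U U' V V' Gb unfolding W_def by (simp add: assoc_mult_mat[of _ n n _ n _ n])
  also have "\<dots> = V * Gb * mat_adjoint V"
    using unitary_mat_mult_adjoint[OF uU] V V' Gb by (simp add: assoc_mult_mat[of _ n n _ n _ n])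
  finally show ?thesis unfolding spectral_mat_def Gb_def .
qed

lemma mat_fun_spectral_mat:
  assumes "unitary_mat n U"
  shows "mat_fun f n (spectral_mat n U a) = spectral_mat n U (\<lambda>i. f (a i))"
proof -
  let ?P = "\<lambda>B. \<exists>V e. unitary_mat n V \<and>
       spectral_mat n U a = V * mat_diag n (\<lambda>i. complex_of_real (e i)) * mat_adjoint V \<and>
       B = V * mat_diag n (\<lambda>i. complex_of_real (f (e i))) * mat_adjoint V"
  have "?P (spectral_mat n U (\<lambda>i. f (a i)))" using assms unfolding spectral_mat_def by blast
  hence "?P (mat_fun f n (spectral_mat n U a))" unfolding mat_fun_def by (rule someI)
  then obtain V e where V: "unitary_mat n V" and e1: "spectral_mat n U a = spectral_mat n V e"
    and e2: "mat_fun f n (spectral_mat n U a) = spectral_mat n V (\<lambda>i. f (e i))"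
    unfolding spectral_mat_def by blast
  show ?thesis unfolding e2 using spectral_mat_eq_imp_fun_eq[OF assms V e1] by simp
qed

lemma mat_abs_spectral_mat:
  assumes uU: "unitary_mat n U"
  shows "mat_abs n (spectral_mat n U a) = spectral_mat n U (\<lambda>i. \<bar>a i\<bar>)"
proof -
  have "mat_adjoint (spectral_mat n U a) * spectral_mat n U a = spectral_mat n U (\<lambda>i. a i * a i)"
    using uU by (simp add: mat_adjoint_spectral_mat spectral_mat_mult)
  thus ?thesis unfolding mat_abs_def using mat_fun_spectral_mat[OF uU, of sqrt] by simp
qed

lemma spectral_mat_quadratic_form:
  assumes uU: "unitary_mat n U" and v: "v \<in> carrier_vec n"
  shows "(spectral_mat n U a *\<^sub>v v) \<bullet>c v
    = complex_of_real (\<Sum>l<n. a l * (cmod ((mat_adjoint U *\<^sub>v v) $ l))^2)"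
proof -
  have U: "U \<in> carrier_mat n n" and U': "mat_adjoint U \<in> carrier_mat n n"
    using uU by (auto simp: mat_adjoint_carrier)
  define D where "D = mat_diag n (\<lambda>i. complex_of_real (a i))"
  have D: "D \<in> carrier_mat n n" by (simp add: D_def)
  define w where "w = mat_adjoint U *\<^sub>v v"
  have w: "w \<in> carrier_vec n" using U' v by (simp add: w_def)
  have "spectral_mat n U a *\<^sub>v v = U *\<^sub>v (D *\<^sub>v w)"
    unfolding spectral_mat_def D_def[symmetric] w_def using U U' D v
    by (simp add: assoc_mult_mat[of _ n n _ n _ n] assoc_mult_mat_vec[of _ n n _ n])
  hence "(spectral_mat n U a *\<^sub>v v) \<bullet>c v = (D *\<^sub>v w) \<bullet>c w"
    using cscalar_prod_mult_mat_vec[OF U _ v, of "D *\<^sub>v w"] D w unfolding w_def by simp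
  also have "\<dots> = (\<Sum>l<n. complex_of_real (a l) * w $ l * cnj (w $ l))"
  proof -
    have e: "\<And>P x y. (if P then x else 0) * (y::complex) = (if P then x * y else 0)" by simp
    show ?thesis
      using D w unfolding D_def by (simp add: scalar_prod_def atLeast0LessThan row_def mat_diag_def e)
  qed
  also have "\<dots> = complex_of_real (\<Sum>l<n. a l * (cmod (w $ l))^2)"
    by (simp add: mult.assoc flip: complex_norm_square)
  finally show ?thesis unfolding w_def .
qed

lemma psd_spectral_mat_iff:
  assumes uU: "unitary_mat n U"
  shows "psd_mat n (spectral_mat n U a) \<longleftrightarrow> (\<forall>i<n. 0 \<le> a i)"
proof
  have U: "U \<in> carrier_mat n n" and U': "mat_adjoint U \<in> carrier_mat n n"
    using uU by (auto simp: mat_adjoint_carrier)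
  assume psd: "psd_mat n (spectral_mat n U a)"
  show "\<forall>i<n. 0 \<le> a i"
  proof (intro allI impI)
    fix i assume i: "i < n"
    have v: "col U i \<in> carrier_vec n" by (rule col_carrier_vec[OF i U])
    have "mat_adjoint U *\<^sub>v col U i = col (mat_adjoint U * U) i"
      by (rule col_mult2[OF U' U i, symmetric])
    also have "\<dots> = unit_vec n i" using uU i unfolding unitary_mat_def by simp
    finally have e: "mat_adjoint U *\<^sub>v col U i = (unit_vec n i :: complex vec)" .
    have "0 \<le> Re ((spectral_mat n U a *\<^sub>v col U i) \<bullet>c col U i)"
      using psd v unfolding psd_mat_def by blast
    also have "\<dots> = (\<Sum>l<n. a l * (cmod (unit_vec n i $ l))^2)"
      unfolding spectral_mat_quadratic_form[OF uU v] e Re_complex_of_real ..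
    also have "\<dots> = (\<Sum>l<n. if l = i then a i else 0)"
      by (intro sum.cong refl) (simp add: unit_vec_def)
    also have "\<dots> = a i" using i by simp
    finally show "0 \<le> a i" .
  qed
next
  have U: "U \<in> carrier_mat n n" using uU by simp
  assume a: "\<forall>i<n. 0 \<le> a i"
  have "0 \<le> Re ((spectral_mat n U a *\<^sub>v v) \<bullet>c v)" if v: "v \<in> carrier_vec n" for v
    unfolding spectral_mat_quadratic_form[OF uU v] Re_complex_of_real
    using a by (intro sum_nonneg mult_nonneg_nonneg) auto
  thus "psd_mat n (spectral_mat n U a)"
    unfolding psd_mat_def hermitian_mat_def using U mat_adjoint_spectral_mat[OF U] by simp
qed

section \<open>The spectral theorem for Hermitian matrices\<close>

lemma eigenvector_vanishing_prefix:
  fixes B :: "complex mat"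
  assumes B: "B \<in> carrier_mat n n" and k: "k < n"
    and z: "\<And>i j. i < k \<Longrightarrow> k \<le> j \<Longrightarrow> j < n \<Longrightarrow> B $$ (i,j) = 0"
  obtains \<mu> x where "x \<in> carrier_vec n" "x \<noteq> 0\<^sub>v n" "\<forall>i<k. x $ i = 0" "B *\<^sub>v x = \<mu> \<cdot>\<^sub>v x"
proof -
  define m where "m = n - k"
  have nm: "n = m + k" using k by (simp add: m_def)
  text \<open>An eigenvector of the trailing block, padded with zeros, is one of \<open>B\<close>.\<close>
  define C where "C = mat m m (\<lambda>(i,j). B $$ (i+k, j+k))"
  have C: "C \<in> carrier_mat m m" by (simp add: C_def)
  obtain \<mu> where "eigenvalue C \<mu>"
    using spectrum_non_empty[OF C] k unfolding spectrum_def m_def by auto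
  then obtain y where y: "y \<in> carrier_vec m" "y \<noteq> 0\<^sub>v m" "C *\<^sub>v y = \<mu> \<cdot>\<^sub>v y"
    unfolding eigenvalue_def eigenvector_def using C by auto
  define x where "x = vec n (\<lambda>i. if i < k then 0 else y $ (i - k))"
  have x: "x \<in> carrier_vec n" by (simp add: x_def)
  have x0: "\<forall>i<k. x $ i = 0" using k by (simp add: x_def)
  have "x \<noteq> 0\<^sub>v n"
  proof
    assume "x = 0\<^sub>v n"
    hence "x $ (i + k) = 0" if "i < m" for i using that nm by simp
    hence "y = 0\<^sub>v m" using y(1) nm by (intro eq_vecI) (auto simp: x_def)
    thus False using y(2) by simp
  qed
  moreover have "B *\<^sub>v x = \<mu> \<cdot>\<^sub>v x"
  proof (rule eq_vecI)
    fix i assume "i < dim_vec (\<mu> \<cdot>\<^sub>v x)"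
    hence i: "i < n" by (simp add: x_def)
    have "(B *\<^sub>v x) $ i = (\<Sum>j=0..<k. B $$ (i,j) * x $ j) + (\<Sum>j=k..<n. B $$ (i,j) * x $ j)"
      using B i x k by (simp add: scalar_prod_def row_def sum.atLeastLessThan_concat)
    also have "(\<Sum>j=0..<k. B $$ (i,j) * x $ j) = 0" using x0 by simp
    also have "(\<Sum>j=k..<n. B $$ (i,j) * x $ j) = (\<Sum>j=0..<m. B $$ (i,j+k) * x $ (j+k))"
      using sum.shift_bounds_nat_ivl[of "\<lambda>j. B $$ (i,j) * x $ j" 0 k m] nm by simp
    also have "\<dots> = (\<Sum>j=0..<m. B $$ (i,j+k) * y $ j)"
      by (intro sum.cong refl) (simp add: x_def nm)
    finally have e: "(B *\<^sub>v x) $ i = (\<Sum>j=0..<m. B $$ (i,j+k) * y $ j)" by simp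
    show "(B *\<^sub>v x) $ i = (\<mu> \<cdot>\<^sub>v x) $ i"
    proof (cases "i < k")
      case True
      thus ?thesis unfolding e using z i nm x0 x by simp
    next
      case False
      have "(C *\<^sub>v y) $ (i - k) = (\<Sum>j=0..<m. B $$ (i,j+k) * y $ j)"
        using False i nm y(1) by (simp add: C_def scalar_prod_def row_def)
      thus ?thesis unfolding e using y(3) False i nm y(1) x by (simp add: x_def)
    qed
  qed (use B in \<open>simp add: x_def\<close>)
  ultimately show ?thesis using that x x0 by blast
qed

lemma unit_eigenvector_vanishing_prefix:
  fixes B :: "complex mat"
  assumes B: "B \<in> carrier_mat n n" and k: "k < n"
    and z: "\<And>i j. i < k \<Longrightarrow> k \<le> j \<Longrightarrow> j < n \<Longrightarrow> B $$ (i,j) = 0"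
  obtains \<mu> u where "u \<in> carrier_vec n" "(\<Sum>i<n. (cmod (u $ i))^2) = 1" "\<forall>i<k. u $ i = 0"
    "Im (u $ k) = 0" "B *\<^sub>v u = \<mu> \<cdot>\<^sub>v u"
proof -
  obtain \<mu> x where x: "x \<in> carrier_vec n" and xn0: "x \<noteq> 0\<^sub>v n" and x0: "\<forall>i<k. x $ i = 0"
    and ev: "B *\<^sub>v x = \<mu> \<cdot>\<^sub>v x"
    using eigenvector_vanishing_prefix[OF B k z] by blast
  obtain i0 where i0: "i0 < n" "x $ i0 \<noteq> 0"
    using x xn0 by (metis eq_vecI carrier_vecD index_zero_vec)
  define s where "s = (\<Sum>i<n. (cmod (x $ i))^2)"
  have "(cmod (x $ i0))^2 \<le> s" unfolding s_def using i0 by (intro member_le_sum) auto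
  moreover have "(cmod (x $ i0))^2 > 0" using i0 by simp
  ultimately have s0: "s > 0" by linarith
  define r where "r = sqrt s"
  have r0: "r > 0" and rr: "r^2 = s" using s0 by (simp_all add: r_def)
  define ph where "ph = (if x $ k = 0 then 1 else cnj (x $ k) / complex_of_real (cmod (x $ k)))"
  have ph1: "cmod ph = 1" by (simp add: ph_def norm_divide)
  define c where "c = ph / complex_of_real r"
  define u where "u = c \<cdot>\<^sub>v x"
  have "B *\<^sub>v u = \<mu> \<cdot>\<^sub>v u"
    using B x ev by (simp add: u_def mult_mat_vec smult_smult_assoc mult.commute)
  moreover have "(\<Sum>i<n. (cmod (u $ i))^2) = 1"
  proof -
    have "(\<Sum>i<n. (cmod (u $ i))^2) = (\<Sum>i<n. (cmod c)^2 * (cmod (x $ i))^2)"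
      using x by (intro sum.cong refl) (simp add: u_def norm_mult power_mult_distrib)
    also have "\<dots> = (cmod c)^2 * s" by (simp add: s_def sum_distrib_left)
    also have "cmod c = 1 / r" using ph1 r0 by (simp add: c_def norm_divide)
    finally show ?thesis using rr r0 s0 by (simp add: power_divide)
  qed
  moreover have "Im (u $ k) = 0"
  proof (cases "x $ k = 0")
    case True thus ?thesis using x k by (simp add: u_def)
  next
    case False
    have "u $ k = cnj (x $ k) * x $ k / complex_of_real (cmod (x $ k) * r)"
      using x k False by (simp add: u_def c_def ph_def)
    also have "cnj (x $ k) * x $ k = complex_of_real ((cmod (x $ k))^2)"
      by (metis complex_norm_square mult.commute)
    finally show ?thesis by simp
  qed
  moreover have "u \<in> carrier_vec n" "\<forall>i<k. u $ i = 0" using x x0 k by (simp_all add: u_def)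
  ultimately show ?thesis using that by blast
qed

definition householder_mat :: "nat \<Rightarrow> complex vec \<Rightarrow> complex mat" where
  "householder_mat n w = mat n n (\<lambda>(i,j). (if i = j then 1 else 0)
     - complex_of_real (2 / (\<Sum>l<n. (cmod (w $ l))^2)) * w $ i * cnj (w $ j))"

lemma householder_mat_carrier[simp]: "householder_mat n w \<in> carrier_mat n n"
  by (simp add: householder_mat_def)

lemma mat_adjoint_householder_mat: "mat_adjoint (householder_mat n w) = householder_mat n w"
  by (rule eq_matI) (auto simp: mat_adjoint_altdef householder_mat_def)

lemma sum_kronecker_diff_mult:
  fixes X Y :: "nat \<Rightarrow> complex"
  assumes "i < n" "j < n"
  shows "(\<Sum>l=0..<n. ((if i = l then 1 else 0) - X l) * ((if l = j then 1 else 0) - Y l))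
     = (if i = j then 1 else 0) - X j - Y i + (\<Sum>l=0..<n. X l * Y l)"
proof -
  have "(\<Sum>l=0..<n. ((if i = l then 1 else 0) - X l) * ((if l = j then 1 else 0) - Y l))
    = (\<Sum>l=0..<n. (if l = i then (if i = j then 1 else 0) else 0) - (if l = j then X l else 0)
          - (if l = i then Y l else 0) + X l * Y l)"
    by (intro sum.cong refl) (auto simp: algebra_simps)
  also have "\<dots> = (if i = j then 1 else 0) - X j - Y i + (\<Sum>l=0..<n. X l * Y l)"
    using assms by (simp add: sum.distrib sum_subtractf)
  finally show ?thesis .
qed

lemma householder_mat_involutive: "householder_mat n w * householder_mat n w = 1\<^sub>m n"
proof -
  define t where "t = (\<Sum>l<n. (cmod (w $ l))^2)"
  define c where "c = 2 / t"
  have cct: "c * c * t = 2 * c" by (cases "t = 0") (auto simp: c_def)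
  have H: "householder_mat n w
      = mat n n (\<lambda>(i,j). (if i = j then 1 else 0) - complex_of_real c * w $ i * cnj (w $ j))"
    by (simp add: householder_mat_def c_def t_def)
  show ?thesis
  proof (rule eq_matI)
    fix i j assume "i < dim_row (1\<^sub>m n :: complex mat)" "j < dim_col (1\<^sub>m n :: complex mat)"
    hence i: "i < n" and j: "j < n" by auto
    have "(householder_mat n w * householder_mat n w) $$ (i,j)
        = (\<Sum>l=0..<n. ((if i = l then 1 else 0) - complex_of_real c * w $ i * cnj (w $ l))
             * ((if l = j then 1 else 0) - complex_of_real c * w $ l * cnj (w $ j)))"
      using i j by (simp add: H scalar_prod_def)
    also have "\<dots> = (if i = j then 1 else 0) - complex_of_real c * w $ i * cnj (w $ j)
         - complex_of_real c * w $ i * cnj (w $ j)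
         + (\<Sum>l=0..<n. complex_of_real c * w $ i * cnj (w $ l)
             * (complex_of_real c * w $ l * cnj (w $ j)))"
      by (rule sum_kronecker_diff_mult[OF i j])
    also have "(\<Sum>l=0..<n. complex_of_real c * w $ i * cnj (w $ l)
             * (complex_of_real c * w $ l * cnj (w $ j)))
        = complex_of_real (c * c) * w $ i * cnj (w $ j) * (\<Sum>l=0..<n. w $ l * cnj (w $ l))"
      by (simp add: sum_distrib_left mult_ac)
    also have "(\<Sum>l=0..<n. w $ l * cnj (w $ l)) = complex_of_real t"
      by (simp add: t_def atLeast0LessThan flip: complex_norm_square)
    finally have "(householder_mat n w * householder_mat n w) $$ (i,j)
        = (if i = j then 1 else 0) + complex_of_real (c * c * t - 2 * c) * w $ i * cnj (w $ j)"
      by (simp add: algebra_simps)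
    thus "(householder_mat n w * householder_mat n w) $$ (i,j) = 1\<^sub>m n $$ (i,j)"
      using i j cct by simp
  qed (simp_all add: householder_mat_def)
qed

lemma unitary_householder_mat: "unitary_mat n (householder_mat n w)"
  unfolding unitary_mat_def mat_adjoint_householder_mat householder_mat_involutive by simp

text \<open>The reflection in \<open>w = e\<^sub>k - u\<close> swaps \<open>e\<^sub>k\<close> and \<open>u\<close> (as \<open>\<parallel>u\<parallel> = 1\<close> and
  \<open>u\<^sub>k\<close> is real) and fixes every \<open>e\<^sub>j\<close> with \<open>j < k\<close> (as \<open>u\<^sub>j = 0\<close>).\<close>

lemma householder_mat_unit_vec:
  assumes u: "u \<in> carrier_vec n" and k: "k < n" and un: "(\<Sum>i<n. (cmod (u $ i))^2) = 1"
    and u0: "\<forall>i<k. u $ i = 0" and uk: "Im (u $ k) = 0"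
  defines "w \<equiv> unit_vec n k - u"
  shows "householder_mat n w *\<^sub>v unit_vec n k = u"
    and "\<And>j. j < k \<Longrightarrow> householder_mat n w *\<^sub>v unit_vec n j = unit_vec n j"
proof -
  define t where "t = (\<Sum>i<n. (cmod (w $ i))^2)"
  define c where "c = 2 / t"
  have wi: "\<And>i. i < n \<Longrightarrow> w $ i = (if i = k then 1 else 0) - u $ i"
    using u k by (simp add: w_def)
  have col: "\<And>j. j < n \<Longrightarrow> householder_mat n w *\<^sub>v unit_vec n j
      = vec n (\<lambda>i. (if i = j then 1 else 0) - complex_of_real c * w $ i * cnj (w $ j))"
    by (subst mult_mat_vec_unit_vec) (auto simp: householder_mat_def c_def t_def)
  have wk: "w $ k = complex_of_real (1 - Re (u $ k))"
    using k uk by (simp add: wi complex_eq_iff)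
  have t: "t = 2 * (1 - Re (u $ k))"
  proof -
    have "t = (\<Sum>i<n. (cmod (u $ i))^2 + (if i = k then 1 - 2 * Re (u $ k) else 0))"
      unfolding t_def using uk by (intro sum.cong refl) (auto simp: wi cmod_power2 power2_diff)
    also have "\<dots> = 2 * (1 - Re (u $ k))" using un k by (simp add: sum.distrib)
    finally show ?thesis .
  qed
  show "householder_mat n w *\<^sub>v unit_vec n k = u"
  proof (cases "t = 0")
    case True
    hence "w $ i = 0" if "i < n" for i
      using that unfolding t_def by (subst (asm) sum_nonneg_eq_0_iff) auto
    hence "u $ i = (if i = k then 1 else 0)" if "i < n" for i
      using wi[OF that] that by simp
    thus ?thesis unfolding col[OF k] using u by (intro eq_vecI) (auto simp: c_def True)
  next
    case False
    have "1 - Re (u $ k) \<noteq> 0" using False t by simp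
    hence ck: "complex_of_real c * cnj (w $ k) = 1" unfolding wk c_def t by (simp add: field_simps)
    have "(if i = k then 1 else 0) - complex_of_real c * w $ i * cnj (w $ k) = u $ i"
      if "i < n" for i
    proof -
      have "complex_of_real c * w $ i * cnj (w $ k) = w $ i * (complex_of_real c * cnj (w $ k))"
        by (simp only: mult_ac)
      also have "\<dots> = w $ i" by (simp add: ck)
      finally have e: "complex_of_real c * w $ i * cnj (w $ k) = w $ i" .
      show ?thesis unfolding e using wi[OF that] by simp
    qed
    thus ?thesis unfolding col[OF k] using u by (intro eq_vecI) auto
  qed
  fix j assume j: "j < k"
  have "w $ j = 0" using j k u0 by (simp add: wi)
  thus "householder_mat n w *\<^sub>v unit_vec n j = unit_vec n j"
    unfolding col[OF less_trans[OF j k]] by (intro eq_vecI) (auto simp: unit_vec_def)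
qed

lemma unit_vec_eigenvector_offdiag_zero:
  assumes "(B :: complex mat) \<in> carrier_mat n n" "j < n" "i < n" "i \<noteq> j"
    and "B *\<^sub>v unit_vec n j = c \<cdot>\<^sub>v unit_vec n j"
  shows "B $$ (i,j) = 0"
proof -
  have "B $$ (i,j) = col B j $ i" using assms by simp
  also have "col B j = c \<cdot>\<^sub>v unit_vec n j" using assms mult_mat_vec_unit_vec[OF assms(1,2)] by simp
  finally show ?thesis using assms by simp
qed

text \<open>\<open>V\<close> is the Householder reflection exchanging \<open>e\<^sub>k\<close> with a unit eigenvector
  of \<open>B\<close> supported on the indices \<open>\<ge> k\<close>.\<close>

lemma hermitian_diagonalize_step:
  assumes hB: "hermitian_mat n B" and k: "k < n"
    and diag: "\<forall>i<n. \<forall>j<k. i \<noteq> j \<longrightarrow> B $$ (i,j) = 0"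
  obtains V where "unitary_mat n V" "mat_adjoint V = V"
    "\<forall>i<n. \<forall>j<Suc k. i \<noteq> j \<longrightarrow> (V * B * V) $$ (i,j) = 0"
proof -
  have B: "B \<in> carrier_mat n n" and adjB: "mat_adjoint B = B"
    using hB unfolding hermitian_mat_def by auto
  have Bz: "B $$ (i,j) = 0" if "i < n" "j < n" "i \<noteq> j" "i < k \<or> j < k" for i j
  proof (cases "j < k")
    case True thus ?thesis using diag that by blast
  next
    case False
    have "B $$ (i,j) = cnj (B $$ (j,i))"
      using arg_cong[OF adjB, of "\<lambda>M. M $$ (i,j)"] B that by simp
    thus ?thesis using diag that False by auto
  qed
  obtain \<mu> u where u: "u \<in> carrier_vec n" and un: "(\<Sum>i<n. (cmod (u $ i))^2) = 1"
    and u0: "\<forall>i<k. u $ i = 0" and uk: "Im (u $ k) = 0" and ev: "B *\<^sub>v u = \<mu> \<cdot>\<^sub>v u"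
  proof (rule unit_eigenvector_vanishing_prefix[OF B k])
    fix i j assume "i < k" "k \<le> j" "j < n"
    thus "B $$ (i,j) = 0" using Bz[of i j] by simp
  qed
  define V where "V = householder_mat n (unit_vec n k - u)"
  have V: "V \<in> carrier_mat n n" and VV: "V * V = 1\<^sub>m n"
    by (simp_all add: V_def householder_mat_involutive)
  have Vk: "V *\<^sub>v unit_vec n k = u" and Vj: "\<And>j. j < k \<Longrightarrow> V *\<^sub>v unit_vec n j = unit_vec n j"
    using householder_mat_unit_vec[OF u k un u0 uk] unfolding V_def by auto
  have VBV: "(V * B * V) *\<^sub>v x = V *\<^sub>v (B *\<^sub>v (V *\<^sub>v x))" if "x \<in> carrier_vec n" for x
    using V B that by (simp add: assoc_mult_mat_vec[of _ n n _ n])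
  have VBVc: "V * B * V \<in> carrier_mat n n" using V B by simp
  have col_j: "(V * B * V) *\<^sub>v unit_vec n j = B $$ (j,j) \<cdot>\<^sub>v unit_vec n j" if j: "j < k" for j
  proof -
    have "B *\<^sub>v unit_vec n j = col B j" using j k by (intro mult_mat_vec_unit_vec[OF B]) simp
    also have "\<dots> = B $$ (j,j) \<cdot>\<^sub>v unit_vec n j"
      using B Bz j k by (intro eq_vecI) (auto simp: unit_vec_def)
    finally show ?thesis
      using VBV[of "unit_vec n j"] Vj[OF j] mult_mat_vec[OF V unit_vec_carrier[of n j]] by simp
  qed
  have col_k: "(V * B * V) *\<^sub>v unit_vec n k = \<mu> \<cdot>\<^sub>v unit_vec n k"
  proof -
    have Vu: "V *\<^sub>v u = unit_vec n k"
      using V VV by (simp add: Vk[symmetric] assoc_mult_mat_vec[of _ n n _ n, symmetric])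
    show ?thesis using VBV[of "unit_vec n k"] mult_mat_vec[OF V u] by (simp add: Vk ev Vu)
  qed
  have "(V * B * V) $$ (i,j) = 0" if "i < n" "j < Suc k" "i \<noteq> j" for i j
  proof (cases "j < k")
    case True
    thus ?thesis
      using unit_vec_eigenvector_offdiag_zero[OF VBVc _ that(1,3) col_j[OF True]] k by simp
  next
    case False
    hence "j = k" using that(2) by simp
    thus ?thesis using unit_vec_eigenvector_offdiag_zero[OF VBVc k that(1) _ col_k] that(3) by simp
  qed
  thus ?thesis
    using that unitary_householder_mat mat_adjoint_householder_mat unfolding V_def by blast
qed

lemma hermitian_diagonalize_prefix:
  assumes hA: "hermitian_mat n A" and "k \<le> n"
  shows "\<exists>W. unitary_mat n W \<and> (\<forall>i<n. \<forall>j<k. i \<noteq> j \<longrightarrow> (mat_adjoint W * A * W) $$ (i,j) = 0)"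
  using \<open>k \<le> n\<close>
proof (induction k)
  case 0
  show ?case using unitary_mat_one by blast
next
  case (Suc k)
  then obtain W where uW: "unitary_mat n W"
    and diag: "\<forall>i<n. \<forall>j<k. i \<noteq> j \<longrightarrow> (mat_adjoint W * A * W) $$ (i,j) = 0" by auto
  have A: "A \<in> carrier_mat n n" using hA unfolding hermitian_mat_def by simp
  have W: "W \<in> carrier_mat n n" and W': "mat_adjoint W \<in> carrier_mat n n"
    using uW by (auto simp: mat_adjoint_carrier)
  obtain V where uV: "unitary_mat n V" and adjV: "mat_adjoint V = V"
    and diag': "\<forall>i<n. \<forall>j<Suc k. i \<noteq> j \<longrightarrow> (V * (mat_adjoint W * A * W) * V) $$ (i,j) = 0"
    using hermitian_diagonalize_step[OF hermitian_mat_unitary_conj[OF hA W]] Suc.prems diag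
    by (metis Suc_le_lessD)
  have V: "V \<in> carrier_mat n n" using uV by simp
  have "mat_adjoint (W * V) * A * (W * V) = V * (mat_adjoint W * A * W) * V"
    using A W W' V by (simp add: mat_adjoint_mult[OF W V] adjV assoc_mult_mat[of _ n n _ n _ n])
  thus ?case using diag' unitary_mat_mult[OF uW uV] by metis
qed

theorem hermitian_spectral_decomposition:
  assumes hA: "hermitian_mat n A"
  obtains U d where "unitary_mat n U" "A = spectral_mat n U d"
proof -
  obtain W where uW: "unitary_mat n W"
    and diag: "\<forall>i<n. \<forall>j<n. i \<noteq> j \<longrightarrow> (mat_adjoint W * A * W) $$ (i,j) = 0"
    using hermitian_diagonalize_prefix[OF hA, of n] by auto
  have A: "A \<in> carrier_mat n n" using hA unfolding hermitian_mat_def by auto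
  have W: "W \<in> carrier_mat n n" and W': "mat_adjoint W \<in> carrier_mat n n"
    using uW by (auto simp: mat_adjoint_carrier)
  define B where "B = mat_adjoint W * A * W"
  have B: "B \<in> carrier_mat n n" and adjB: "mat_adjoint B = B"
    using hermitian_mat_unitary_conj[OF hA W] unfolding B_def hermitian_mat_def by auto
  define d where "d = (\<lambda>i. Re (B $$ (i,i)))"
  have BD: "B = mat_diag n (\<lambda>i. complex_of_real (d i))"
  proof (rule eq_matI)
    fix i j assume "i < dim_row (mat_diag n (\<lambda>i. complex_of_real (d i)))"
      "j < dim_col (mat_diag n (\<lambda>i. complex_of_real (d i)))"
    hence i: "i < n" and j: "j < n" by (auto simp: mat_diag_def)
    have "B $$ (i,i) = cnj (B $$ (i,i))"
      using arg_cong[OF adjB, of "\<lambda>M. M $$ (i,i)"] B i by simp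
    hence "B $$ (i,i) = complex_of_real (d i)" unfolding d_def by (simp add: complex_eq_iff)
    thus "B $$ (i,j) = mat_diag n (\<lambda>i. complex_of_real (d i)) $$ (i,j)"
      using diag i j unfolding B_def by (cases "i = j") (auto simp: mat_diag_def)
  qed (use B in \<open>auto simp: mat_diag_def\<close>)
  have "spectral_mat n W d = W * (mat_adjoint W * (A * (W * mat_adjoint W)))"
    unfolding spectral_mat_def BD[symmetric] B_def using A W W'
    by (simp add: assoc_mult_mat[of _ n n _ n _ n])
  also have "\<dots> = A"
    using A by (simp add: unitary_mat_mult_adjoint[OF uW] unitary_mult_adjoint_cancel[OF uW])
  finally show ?thesis using that uW by metis
qed

corollary psd_spectral_decomposition:
  assumes "psd_mat n A"
  obtains U d where "unitary_mat n U" "A = spectral_mat n U d" "\<forall>i<n. 0 \<le> d i"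
  using assms hermitian_spectral_decomposition psd_spectral_mat_iff
  unfolding psd_mat_def by metis

section \<open>Jensen's inequality for superquadratic functions\<close>

lemma state_mat_comp_unital_positive_map:
  assumes \<Phi>: "unital_positive_map n m \<Phi>" and \<tau>: "state_mat m \<tau>"
  shows "state_mat n (\<lambda>X. \<tau> (\<Phi> X))"
  using assms unfolding state_mat_def unital_positive_map_def linear_map_mat_def
  by (simp add: smult_carrier_mat)

lemma state_mat_psd_real:
  assumes "state_mat n \<omega>" "psd_mat n A"
  shows "\<omega> A = complex_of_real (Re (\<omega> A))" "0 \<le> Re (\<omega> A)"
  using assms unfolding state_mat_def by (auto simp: complex_eq_iff complex_is_Real_iff)

theorem superquadratic_state_jensen:
  assumes sq: "superquadratic f" and \<omega>: "state_mat n \<omega>" and pA: "psd_mat n A"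
  shows "f (Re (\<omega> A)) \<le>
           Re (\<omega> (mat_fun f n A)) - Re (\<omega> (mat_fun f n (mat_abs n (A - \<omega> A \<cdot>\<^sub>m 1\<^sub>m n))))"
proof -
  have add: "\<And>X Y. X \<in> carrier_mat n n \<Longrightarrow> Y \<in> carrier_mat n n \<Longrightarrow> \<omega> (X + Y) = \<omega> X + \<omega> Y"
    and smult: "\<And>c X. X \<in> carrier_mat n n \<Longrightarrow> \<omega> (c \<cdot>\<^sub>m X) = c * \<omega> X"
    and unital: "\<omega> (1\<^sub>m n) = 1"
    using \<omega> unfolding state_mat_def by auto
  obtain U d where uU: "unitary_mat n U" and Ad: "A = spectral_mat n U d"
    and d0: "\<And>i. i < n \<Longrightarrow> 0 \<le> d i"
    using psd_spectral_decomposition[OF pA] by blast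
  have U: "U \<in> carrier_mat n n" using uU by simp
  define s where "s = Re (\<omega> A)"
  have \<omega>A: "\<omega> A = complex_of_real s" and s0: "0 \<le> s"
    using state_mat_psd_real[OF \<omega> pA] unfolding s_def by auto
  obtain C where C: "\<And>t. 0 \<le> t \<Longrightarrow> f s + C * (t - s) + f \<bar>t - s\<bar> \<le> f t"
    using sq s0 unfolding superquadratic_def by blast
  define X where "X = spectral_mat n U (\<lambda>i. d i - s)"
  define G where "G = spectral_mat n U (\<lambda>i. f \<bar>d i - s\<bar>)"
  define M where "M = spectral_mat n U (\<lambda>i. f (d i) - f s - C * (d i - s) - f \<bar>d i - s\<bar>)"
  have one: "1\<^sub>m n = spectral_mat n U (\<lambda>_. 1)" using spectral_mat_one[OF uU] by simp
  have A: "A \<in> carrier_mat n n" using U by (simp add: Ad)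
  have X: "A - \<omega> A \<cdot>\<^sub>m 1\<^sub>m n = X"
    unfolding \<omega>A by (simp add: Ad one X_def spectral_mat_smult[OF U] spectral_mat_diff[OF U])
  have \<omega>X: "\<omega> X = 0"
  proof -
    have "X = A + complex_of_real (- s) \<cdot>\<^sub>m 1\<^sub>m n"
      unfolding Ad one X_def spectral_mat_smult[OF U] spectral_mat_add[OF U] by simp
    thus ?thesis using add smult unital A \<omega>A by simp
  qed
  have fA: "mat_fun f n A = M + (complex_of_real (f s) \<cdot>\<^sub>m 1\<^sub>m n + (complex_of_real C \<cdot>\<^sub>m X + G))"
    unfolding Ad mat_fun_spectral_mat[OF uU] one M_def X_def G_def
    by (simp add: spectral_mat_smult[OF U] spectral_mat_add[OF U] algebra_simps)
  have "Re (\<omega> (mat_fun f n A)) = Re (\<omega> M) + f s + Re (\<omega> G)"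
    unfolding fA using U add smult unital \<omega>X by (simp add: M_def X_def G_def)
  moreover have "psd_mat n M"
    unfolding M_def psd_spectral_mat_iff[OF uU] using C d0 by (smt (verit))
  hence "0 \<le> Re (\<omega> M)" by (rule state_mat_psd_real(2)[OF \<omega>])
  moreover have "mat_fun f n (mat_abs n (A - \<omega> A \<cdot>\<^sub>m 1\<^sub>m n)) = G"
    unfolding X X_def G_def mat_abs_spectral_mat[OF uU] mat_fun_spectral_mat[OF uU] ..
  ultimately show ?thesis unfolding s_def by simp
qed

theorem lemma2p6:
  fixes f :: "real \<Rightarrow> real" and n m :: nat
    and \<Phi> :: "complex mat \<Rightarrow> complex mat" and \<tau> :: "complex mat \<Rightarrow> complex"
    and A :: "complex mat"
  assumes "continuous_on {0..} f"
    and "superquadratic f"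
    and "unital_positive_map n m \<Phi>"
    and "state_mat m \<tau>"
    and "psd_mat n A"
  shows "f (Re (\<tau> (\<Phi> A))) \<le>
           Re (\<tau> (\<Phi> (mat_fun f n A)))
           - Re (\<tau> (\<Phi> (mat_fun f n (mat_abs n (A - \<tau> (\<Phi> A) \<cdot>\<^sub>m 1\<^sub>m n)))))"
  using superquadratic_state_jensen[OF assms(2) state_mat_comp_unital_positive_map[OF assms(3,4)]
      assms(5)] .

end
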